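(* Let $d\ge 2$ be fixed, $p$ a prime, $\sigma=\lfloor\sqrt{p/d}\rfloor$, and $A=\{1,2,\dots,\sigma\}\subset\mathbb{F}_p$ (elements of $\mathbb{F}_p$ identified with $0,1,\dots,p-1$), and $A^d\subset\mathbb{F}_p^d$ the $d$-fold Cartesian product. Then (i) $x\cdot y\ne 0$ in $\mathbb{F}_p$ for all $x,y\in A^d$, and consequently $x\cdot y\neq 0$ for all $x,y$ in the set $\{\lambda a:\lambda\in\mathbb{F}_p^*,\ a\in A^d\}$; (ii) the number of one-dimensional subspaces (lines through the origin) of $\mathbb{F}_p^d$ that meet $A^d$ is at least $(1-o(1))\frac{2}{\pi^2}\left(\frac{p}{d}\right)^{d/2}$, where $o(1)\to 0$ as $p\to\infty$.
   Context: For $u,v\in\mathbb{F}_p^d$, $u\cdot v=\sum_{i=1}^d u_iv_i$ computed in $\mathbb{F}_p$. *)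

theory Defs
  imports "HOL-Analysis.Analysis"
begin

text \<open>Model of F_p^d: vectors are functions nat => int, supported on {0..<d},
  with coordinates in {0..<p} (the canonical representatives of F_p).\<close>

definition Fp_vecs :: "int \<Rightarrow> nat \<Rightarrow> (nat \<Rightarrow> int) set" where
  "Fp_vecs p d = {x. (\<forall>i<d. x i \<in> {0..<p}) \<and> (\<forall>i\<ge>d. x i = 0)}"

definition fp_dot :: "int \<Rightarrow> nat \<Rightarrow> (nat \<Rightarrow> int) \<Rightarrow> (nat \<Rightarrow> int) \<Rightarrow> int" where
  "fp_dot p d u v = (\<Sum>i<d. u i * v i) mod p"

definition fp_smult :: "int \<Rightarrow> int \<Rightarrow> (nat \<Rightarrow> int) \<Rightarrow> (nat \<Rightarrow> int)" where
  "fp_smult p c v = (\<lambda>i. (c * v i) mod p)"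

definition sigma :: "int \<Rightarrow> nat \<Rightarrow> int" where
  "sigma p d = \<lfloor>sqrt (real_of_int p / real d)\<rfloor>"

definition Ad :: "int \<Rightarrow> nat \<Rightarrow> (nat \<Rightarrow> int) set" where
  "Ad p d = {x. (\<forall>i<d. x i \<in> {1..sigma p d}) \<and> (\<forall>i\<ge>d. x i = 0)}"

definition scaled_Ad :: "int \<Rightarrow> nat \<Rightarrow> (nat \<Rightarrow> int) set" where
  "scaled_Ad p d = {fp_smult p c a | c a. c \<in> {1..<p} \<and> a \<in> Ad p d}"

definition fp_span1 :: "int \<Rightarrow> (nat \<Rightarrow> int) \<Rightarrow> (nat \<Rightarrow> int) set" where
  "fp_span1 p v = {fp_smult p c v | c. c \<in> {0..<p}}"

definition fp_lines :: "int \<Rightarrow> nat \<Rightarrow> (nat \<Rightarrow> int) set set" where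
  "fp_lines p d = {fp_span1 p v | v. v \<in> Fp_vecs p d \<and> v \<noteq> (\<lambda>_. 0)}"

end

theory Submission
  imports Defs
begin

text \<open>
  For \<open>x, y \<in> A\<^sup>d\<close> the integer \<open>\<Sum> x\<^sub>i y\<^sub>i\<close> lies between \<open>d\<close> and \<open>d \<sigma>\<^sup>2 \<le> p\<close>, so it can only
  vanish mod \<open>p\<close> if it equals \<open>p = d \<sigma>\<^sup>2\<close>, forcing \<open>p = d\<close>; scaling by units keeps it nonzero.

  For the lines, call \<open>a \<in> A\<^sup>d\<close> primitive if no \<open>k \<ge> 2\<close> divides all its coordinates. If two
  primitive vectors lie on a common line, their \<open>2\<times>2\<close> minors vanish mod \<open>p\<close> while the products
  involved lie in \<open>[1, \<sigma>\<^sup>2]\<close> with \<open>\<sigma>\<^sup>2 < p\<close>; so the vectors are proportional over \<open>\<int>\<close> and hence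
  equal. The non-primitive vectors number at most \<open>\<Sum>\<^sub>k\<^sub>\<ge>\<^sub>2 (\<sigma>/k)\<^sup>d \<le> (2/3) \<sigma>\<^sup>d\<close>, leaving at least
  \<open>\<sigma>\<^sup>d/3\<close> distinct lines. By Bernoulli's inequality \<open>\<sigma>\<^sup>d \<ge> (2/3) (p/d)\<^sup>d\<^sup>/\<^sup>2\<close> once \<open>p \<ge> 9 d\<^sup>3\<close>, and
  \<open>2/\<pi>\<^sup>2 < 2/9\<close>, so the error term can be taken to be \<open>0\<close> for all large \<open>p\<close>.
\<close>

definition vecs_over :: "nat \<Rightarrow> int set \<Rightarrow> (nat \<Rightarrow> int) set" where
  "vecs_over d B = {x. (\<forall>i<d. x i \<in> B) \<and> (\<forall>i\<ge>d. x i = 0)}"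

lemma Fp_vecs_eq_vecs_over: "Fp_vecs p d = vecs_over d {0..<p}"
  by (simp add: Fp_vecs_def vecs_over_def)

lemma Ad_eq_vecs_over: "Ad p d = vecs_over d {1..sigma p d}"
  by (simp add: Ad_def vecs_over_def)

lemma vecs_over_mono: "B \<subseteq> C \<Longrightarrow> vecs_over d B \<subseteq> vecs_over d C"
  by (auto simp: vecs_over_def)

lemma bij_betw_restrict_vecs_over:
  "bij_betw (\<lambda>x. restrict x {..<d}) (vecs_over d B) (PiE {..<d} (\<lambda>_. B))"
  by (rule bij_betw_byWitness[where f' = "\<lambda>f i. if i < d then f i else 0"])
     (auto simp: vecs_over_def PiE_def extensional_def fun_eq_iff)

lemma finite_vecs_over: "finite B \<Longrightarrow> finite (vecs_over d B)"
  using bij_betw_finite[OF bij_betw_restrict_vecs_over] by (simp add: finite_PiE)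

lemma card_vecs_over: "card (vecs_over d B) = card B ^ d"
  using bij_betw_same_card[OF bij_betw_restrict_vecs_over] by (simp add: card_PiE)

lemma mult_mem_1_square:
  fixes x y s :: int
  assumes "x \<in> {1..s}" "y \<in> {1..s}"
  shows "x * y \<in> {1..s^2}"
  using assms mult_mono[of x s y s] mult_mono[of 1 x 1 y] by (auto simp: power2_eq_square)

lemma sigma_nonneg: "0 \<le> p \<Longrightarrow> 0 \<le> sigma p d"
  by (simp add: sigma_def)

lemma sigma_square_le:
  assumes "0 \<le> p" "0 < d"
  shows "int d * sigma p d ^ 2 \<le> p"
proof -
  have "real_of_int (sigma p d) ^ 2 \<le> sqrt (real_of_int p / real d) ^ 2"
    using assms by (intro power_mono) (simp_all add: sigma_def)
  then have "real_of_int (sigma p d) ^ 2 * real d \<le> real_of_int p"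
    using assms by (simp add: pos_le_divide_eq)
  then have "real_of_int (int d * sigma p d ^ 2) \<le> real_of_int p"
    by (simp add: mult.commute)
  then show ?thesis by (simp only: of_int_le_iff)
qed

section \<open>Nonvanishing dot products\<close>

lemma sum_prod_vecs_over_bounds:
  assumes "x \<in> vecs_over d {1..s}" "y \<in> vecs_over d {1..s}"
  shows "int d \<le> (\<Sum>i<d. x i * y i)" "(\<Sum>i<d. x i * y i) \<le> int d * s^2"
proof -
  have xy: "x i * y i \<in> {1..s^2}" if "i < d" for i
    using assms that by (intro mult_mem_1_square; simp add: vecs_over_def)
  have "(\<Sum>i<d. 1) \<le> (\<Sum>i<d. x i * y i)" "(\<Sum>i<d. x i * y i) \<le> (\<Sum>i<d. s^2)"
    using xy by (intro sum_mono; simp)+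
  then show "int d \<le> (\<Sum>i<d. x i * y i)" "(\<Sum>i<d. x i * y i) \<le> int d * s^2"
    by simp_all
qed

lemma fp_dot_vecs_over_nonzero:
  assumes "prime p" "2 \<le> d" "p \<noteq> int d" "int d * s^2 \<le> p"
    and "x \<in> vecs_over d {1..s}" "y \<in> vecs_over d {1..s}"
  shows "fp_dot p d x y \<noteq> 0"
proof
  let ?S = "\<Sum>i<d. x i * y i"
  assume "fp_dot p d x y = 0"
  then have "p dvd ?S" by (simp add: fp_dot_def dvd_eq_mod_eq_0)
  moreover have "0 < ?S" "?S \<le> int d * s^2"
    using sum_prod_vecs_over_bounds[OF assms(5,6)] assms(2) by simp_all
  ultimately have "int d * s^2 = p"
    using zdvd_imp_le assms(4) by fastforce
  then have "int d dvd p" by (metis dvd_triv_left)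
  then have "int d = 1 \<or> int d = p"
    using assms(1) of_nat_0_le_iff unfolding prime_int_iff by blast
  then show False using assms(2,3) by auto
qed

lemma fp_dot_fp_smult:
  "fp_dot p d (fp_smult p c a) (fp_smult p c' b) = (c * c' * (\<Sum>i<d. a i * b i)) mod p"
proof -
  have "fp_dot p d (fp_smult p c a) (fp_smult p c' b)
      = (\<Sum>i<d. ((c * a i) mod p * ((c' * b i) mod p)) mod p) mod p"
    by (simp add: fp_dot_def fp_smult_def mod_sum_eq)
  also have "\<dots> = (\<Sum>i<d. (c * a i) * (c' * b i)) mod p"
    by (simp add: mod_mult_eq mod_sum_eq)
  also have "(\<Sum>i<d. (c * a i) * (c' * b i)) = c * c' * (\<Sum>i<d. a i * b i)"
    by (simp add: sum_distrib_left algebra_simps)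
  finally show ?thesis .
qed

lemma fp_dot_fp_smult_nonzero:
  assumes "prime p" "c \<in> {1..<p}" "c' \<in> {1..<p}" "fp_dot p d a b \<noteq> 0"
  shows "fp_dot p d (fp_smult p c a) (fp_smult p c' b) \<noteq> 0"
proof -
  have "\<not> p dvd c" "\<not> p dvd c'" using assms(2,3) by (auto simp: zdvd_not_zless)
  moreover have "\<not> p dvd (\<Sum>i<d. a i * b i)"
    using assms(4) by (simp add: fp_dot_def dvd_eq_mod_eq_0)
  ultimately have "\<not> p dvd c * c' * (\<Sum>i<d. a i * b i)"
    using assms(1) by (simp add: prime_dvd_mult_iff)
  then show ?thesis by (simp add: fp_dot_fp_smult dvd_eq_mod_eq_0)
qed

lemma fp_dot_Ad_nonzero:
  assumes "prime p" "p \<noteq> int d" "2 \<le> d" "x \<in> Ad p d" "y \<in> Ad p d"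
  shows "fp_dot p d x y \<noteq> 0"
  using assms sigma_square_le[of p d] prime_ge_0_int[of p]
  by (intro fp_dot_vecs_over_nonzero) (simp_all add: Ad_eq_vecs_over)

lemma fp_dot_scaled_Ad_nonzero:
  assumes "prime p" "p \<noteq> int d" "2 \<le> d" "x \<in> scaled_Ad p d" "y \<in> scaled_Ad p d"
  shows "fp_dot p d x y \<noteq> 0"
proof -
  obtain c a where "x = fp_smult p c a" "c \<in> {1..<p}" "a \<in> Ad p d"
    using assms(4) by (auto simp: scaled_Ad_def)
  moreover obtain c' b where "y = fp_smult p c' b" "c' \<in> {1..<p}" "b \<in> Ad p d"
    using assms(5) by (auto simp: scaled_Ad_def)
  ultimately show ?thesis
    using assms(1-3) by (simp add: fp_dot_fp_smult_nonzero fp_dot_Ad_nonzero)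
qed

section \<open>Counting primitive vectors\<close>

definition primitive :: "nat \<Rightarrow> (nat \<Rightarrow> int) \<Rightarrow> bool" where
  "primitive d x \<longleftrightarrow> (\<forall>k::nat. 2 \<le> k \<longrightarrow> \<not> (\<forall>i<d. int k dvd x i))"

lemma primitive_nonzero: "primitive d x \<Longrightarrow> x \<noteq> (\<lambda>_. 0)"
  by (auto simp: primitive_def)

lemma primitive_common_divisor_eq_1:
  assumes "primitive d x" "0 < u" "\<forall>i<d. u dvd x i"
  shows "u = 1"
  using assms spec[OF assms(1)[unfolded primitive_def], of "nat u"] by fastforce

lemma multiples_in_vecs_over_subset:
  assumes "0 < k"
  shows "{x \<in> vecs_over d {1..s}. \<forall>i<d. k dvd x i} \<subseteq> (\<lambda>x i. k * x i) ` vecs_over d {1..s div k}"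
proof
  fix x assume x: "x \<in> {x \<in> vecs_over d {1..s}. \<forall>i<d. k dvd x i}"
  have "x = (\<lambda>i. k * (x i div k))"
  proof
    fix i show "x i = k * (x i div k)"
      using x by (cases "i < d") (auto simp: vecs_over_def)
  qed
  moreover have "x i div k \<in> {1..s div k}" if "i < d" for i
  proof -
    have "k dvd x i" "1 \<le> x i" "x i \<le> s"
      using x that by (auto simp: vecs_over_def)
    then obtain q where q: "x i = k * q" by blast
    then have "0 < q" using \<open>1 \<le> x i\<close> assms zero_less_mult_pos[of k q] by simp
    then show ?thesis
      using q zdiv_mono1[OF \<open>x i \<le> s\<close> assms] assms by simp
  qed
  then have "(\<lambda>i. x i div k) \<in> vecs_over d {1..s div k}"
    using x by (simp add: vecs_over_def)
  ultimately show "x \<in> (\<lambda>x i. k * x i) ` vecs_over d {1..s div k}" by (rule image_eqI)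
qed

lemma card_multiples_in_vecs_over_le:
  assumes "2 \<le> d" "0 \<le> s" "1 \<le> k"
  shows "real (card {x \<in> vecs_over d {1..s}. \<forall>i<d. int k dvd x i}) \<le> of_int s ^ d / (real k)^2"
proof -
  let ?m = "s div int k"
  have "card {x \<in> vecs_over d {1..s}. \<forall>i<d. int k dvd x i} \<le> card (vecs_over d {1..?m})"
    using multiples_in_vecs_over_subset[of "int k" d s] assms
    by (intro surj_card_le) (simp_all add: finite_vecs_over)
  also have "\<dots> = nat ?m ^ d" by (simp add: card_vecs_over)
  finally have "real (card {x \<in> vecs_over d {1..s}. \<forall>i<d. int k dvd x i}) \<le> real (nat ?m ^ d)"
    by (simp only: of_nat_le_iff)
  also have "\<dots> = of_int ?m ^ d"
    using assms by (simp add: pos_imp_zdiv_nonneg_iff)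
  also have "\<dots> \<le> (of_int s / real k) ^ d"
  proof (rule power_mono)
    have "?m * int k \<le> s"
      using div_mult_mod_eq[of s "int k"] pos_mod_sign[of "int k" s] assms by linarith
    then have "of_int ?m * real k \<le> of_int s"
      by (metis of_int_of_nat_eq of_int_le_iff of_int_mult)
    then show "of_int ?m \<le> of_int s / real k"
      using assms by (simp add: le_divide_eq)
  qed (use assms in \<open>simp add: pos_imp_zdiv_nonneg_iff\<close>)
  also have "\<dots> = of_int s ^ d / real k ^ d" by (simp add: power_divide)
  also have "\<dots> \<le> of_int s ^ d / (real k)^2"
    using assms by (intro divide_left_mono power_increasing) simp_all
  finally show ?thesis .
qed

lemma sum_inverse_squares_le: "(\<Sum>k=2..n. 1 / (real k)^2) \<le> 2/3"
proof (cases "n = 0")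
  case False
  define f where "f k = - 2 / (2 * real k + 1)" for k
  have "1 / (real k)^2 \<le> f k - f (k - 1)" if "k \<in> {2..n}" for k
  proof -
    have k: "2 \<le> real k" using that by simp
    have "4 \<le> real k * real k" using mult_mono[OF k k] by simp
    then have "1 / (real k)^2 \<le> 4 / (4 * (real k)^2 - 1)"
      by (simp add: divide_simps power2_eq_square)
    also have "\<dots> = f k - f (k - 1)"
      using k by (simp add: f_def of_nat_diff field_simps power2_eq_square)
    finally show ?thesis .
  qed
  then have "(\<Sum>k=2..n. 1 / (real k)^2) \<le> (\<Sum>k=2..n. f k - f (k - 1))"
    by (rule sum_mono)
  also have "\<dots> = f n - f 1"
    using sum_telescope''[of 1 n f] False by (simp add: numeral_2_eq_2)
  also have "\<dots> \<le> 2/3" by (simp add: f_def)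
  finally show ?thesis .
qed simp

lemma card_primitive_vecs_over_ge:
  assumes "2 \<le> d" "0 \<le> s"
  shows "of_int s ^ d / 3 \<le> real (card {x \<in> vecs_over d {1..s}. primitive d x})"
proof -
  let ?V = "vecs_over d {1..s}"
  let ?P = "{x \<in> ?V. primitive d x}"
  let ?M = "\<lambda>k. {x \<in> ?V. \<forall>i<d. int k dvd x i}"
  have fin: "finite ?V" by (simp add: finite_vecs_over)
  have "?V - ?P \<subseteq> (\<Union>k\<in>{2..nat s}. ?M k)"
  proof
    fix x assume "x \<in> ?V - ?P"
    then obtain k where k: "2 \<le> k" "\<forall>i<d. int k dvd x i" and x: "x \<in> ?V"
      by (auto simp: primitive_def)
    have "1 \<le> x 0" "x 0 \<le> s" using x assms by (auto simp: vecs_over_def)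
    moreover have "int k dvd x 0" using k assms by simp
    ultimately have "int k \<le> s" using zdvd_imp_le[of "int k" "x 0"] by simp
    then show "x \<in> (\<Union>k\<in>{2..nat s}. ?M k)" using k x by auto
  qed
  then have "card (?V - ?P) \<le> (\<Sum>k=2..nat s. card (?M k))"
    by (intro order_trans[OF card_mono card_UN_le]) (simp_all add: fin)
  then have "real (card (?V - ?P)) \<le> (\<Sum>k=2..nat s. real (card (?M k)))"
    by (simp flip: of_nat_sum)
  also have "\<dots> \<le> (\<Sum>k=2..nat s. of_int s ^ d / (real k)^2)"
    using assms by (intro sum_mono card_multiples_in_vecs_over_le) auto
  also have "\<dots> = of_int s ^ d * (\<Sum>k=2..nat s. 1 / (real k)^2)"
    by (simp add: sum_distrib_left)
  also have "\<dots> \<le> of_int s ^ d * (2/3)"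
    using assms by (intro mult_left_mono sum_inverse_squares_le) simp
  finally have "real (card (?V - ?P)) \<le> of_int s ^ d * (2/3)" .
  moreover have "card ?P + card (?V - ?P) = card ?V"
  proof -
    have "?P \<subseteq> ?V" by blast
    then show ?thesis
      using card_mono[OF fin] card_Diff_subset[OF finite_subset[OF _ fin]] by fastforce
  qed
  moreover have "real (card ?V) = of_int s ^ d"
    using assms by (simp add: card_vecs_over)
  ultimately show ?thesis by (simp flip: of_nat_add)
qed

section \<open>Primitive vectors span distinct lines\<close>

lemma fp_smult_1:
  assumes "x \<in> Fp_vecs p d"
  shows "fp_smult p 1 x = x"
proof
  fix i show "fp_smult p 1 x i = x i"
    using assms by (cases "i < d") (auto simp: Fp_vecs_def fp_smult_def)
qed

lemma self_in_fp_span1: "1 < p \<Longrightarrow> x \<in> Fp_vecs p d \<Longrightarrow> x \<in> fp_span1 p x"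
  using fp_smult_1[of x p d] by (auto simp: fp_span1_def intro!: exI[of _ 1])

lemma vecs_over_subset_Fp_vecs:
  assumes "0 \<le> s" "s^2 < p"
  shows "vecs_over d {1..s} \<subseteq> Fp_vecs p d"
proof -
  have "s \<le> s^2"
    using assms mult_left_mono[of 1 s s] by (cases "s = 0") (auto simp: power2_eq_square)
  then show ?thesis
    using assms by (auto simp: Fp_vecs_eq_vecs_over intro!: vecs_over_mono)
qed

lemma finite_fp_lines: "finite (fp_lines p d)"
proof -
  have "fp_lines p d \<subseteq> fp_span1 p ` Fp_vecs p d" by (auto simp: fp_lines_def)
  then show ?thesis
    by (rule finite_subset) (simp add: Fp_vecs_eq_vecs_over finite_vecs_over)
qed

lemma fp_span1_cross_dvd:
  assumes "b \<in> fp_span1 p a"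
  shows "p dvd a i * b j - a j * b i"
proof -
  from assms obtain c where "b = fp_smult p c a" by (auto simp: fp_span1_def)
  then have b: "b k = c * a k - p * (c * a k div p)" for k
    by (simp add: fp_smult_def minus_div_mult_eq_mod[symmetric] mult.commute)
  have "a i * b j - a j * b i = p * (a j * (c * a i div p) - a i * (c * a j div p))"
    by (simp add: b algebra_simps)
  then show ?thesis by simp
qed

lemma primitive_proportional_eq:
  assumes a: "a \<in> vecs_over d {1..s}" and b: "b \<in> vecs_over d {1..s}"
    and "primitive d a" "primitive d b"
    and cross: "\<forall>i<d. \<forall>j<d. a i * b j = a j * b i"
  shows "a = b"
proof (cases "d = 0")
  case True
  then show ?thesis using a b by (auto simp: vecs_over_def fun_eq_iff)
next
  case False
  define g where "g = gcd (a 0) (b 0)"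
  define u where "u = a 0 div g"
  define v where "v = b 0 div g"
  have pos: "0 < a 0" "0 < b 0" using a b False by (auto simp: vecs_over_def)
  then have "0 < g" by (simp add: g_def)
  have a0: "a 0 = g * u" and b0: "b 0 = g * v"
    by (simp_all add: g_def u_def v_def)
  have "coprime u v" using pos by (simp add: g_def u_def v_def div_gcd_coprime)
  have uv: "u * b j = v * a j" if "j < d" for j
  proof -
    have "g * (u * b j) = g * (v * a j)"
      using cross that False by (metis a0 b0 mult.assoc mult.commute not_gr_zero)
    then show ?thesis using \<open>0 < g\<close> by simp
  qed
  have "u = 1"
  proof (rule primitive_common_divisor_eq_1[OF \<open>primitive d a\<close>])
    show "0 < u" using pos \<open>0 < g\<close> a0 by (simp add: zero_less_mult_iff)
    show "\<forall>j<d. u dvd a j"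
      using uv \<open>coprime u v\<close> by (metis coprime_dvd_mult_right_iff dvd_triv_left)
  qed
  moreover have "v = 1"
  proof (rule primitive_common_divisor_eq_1[OF \<open>primitive d b\<close>])
    show "0 < v" using pos \<open>0 < g\<close> b0 by (simp add: zero_less_mult_iff)
    show "\<forall>j<d. v dvd b j"
      using uv \<open>coprime u v\<close> by (metis coprime_commute coprime_dvd_mult_right_iff dvd_triv_left)
  qed
  ultimately have "a j = b j" if "j < d" for j
    using uv that by simp
  moreover have "a j = b j" if "\<not> j < d" for j
    using a b that by (simp add: vecs_over_def)
  ultimately show ?thesis by blast
qed

lemma fp_span1_inj_on_primitive:
  assumes "1 < p" "0 \<le> s" "s^2 < p"
  shows "inj_on (fp_span1 p) {x \<in> vecs_over d {1..s}. primitive d x}"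
proof (rule inj_onI)
  fix a b
  assume a: "a \<in> {x \<in> vecs_over d {1..s}. primitive d x}"
    and b: "b \<in> {x \<in> vecs_over d {1..s}. primitive d x}"
    and span: "fp_span1 p a = fp_span1 p b"
  have "b \<in> fp_span1 p a"
    using self_in_fp_span1 vecs_over_subset_Fp_vecs assms b span by blast
  have "a i * b j = a j * b i" if "i < d" "j < d" for i j
  proof -
    have "a i * b j \<in> {1..s^2}" "a j * b i \<in> {1..s^2}"
      using a b that by (intro mult_mem_1_square; simp add: vecs_over_def)+
    moreover have "p dvd a i * b j - a j * b i"
      using fp_span1_cross_dvd[OF \<open>b \<in> fp_span1 p a\<close>] .
    \<comment> \<open>both products are canonical residues, so the congruence is an equality\<close>
    ultimately show ?thesis
      using assms by (metis atLeastAtMost_iff mod_eq_dvd_iff mod_pos_pos_trivial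
          order_le_less_trans zero_le_one order_trans)
  qed
  then show "a = b" using a b by (auto intro: primitive_proportional_eq)
qed

lemma card_primitive_le_card_lines:
  assumes "1 < p" "0 \<le> s" "s^2 < p"
  shows "card {x \<in> vecs_over d {1..s}. primitive d x}
           \<le> card {L \<in> fp_lines p d. L \<inter> vecs_over d {1..s} \<noteq> {}}"
proof (rule card_inj_on_le[OF fp_span1_inj_on_primitive[OF assms]])
  show "fp_span1 p ` {x \<in> vecs_over d {1..s}. primitive d x}
          \<subseteq> {L \<in> fp_lines p d. L \<inter> vecs_over d {1..s} \<noteq> {}}"
  proof clarify
    fix a assume a: "a \<in> vecs_over d {1..s}" "primitive d a"
    then have "a \<in> Fp_vecs p d" using vecs_over_subset_Fp_vecs assms by blast
    moreover have "a \<noteq> (\<lambda>_. 0)" using a primitive_nonzero by blast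
    ultimately have "fp_span1 p a \<in> fp_lines p d" by (auto simp: fp_lines_def)
    moreover have "a \<in> fp_span1 p a" using self_in_fp_span1 assms \<open>a \<in> Fp_vecs p d\<close> by blast
    ultimately show "fp_span1 p a \<in> fp_lines p d \<and> fp_span1 p a \<inter> vecs_over d {1..s} \<noteq> {}"
      using a by blast
  qed
qed (simp add: finite_fp_lines)

lemma floor_power_ge:
  fixes s :: real
  assumes "1 \<le> s"
  shows "(1 - real n / s) * s ^ n \<le> of_int \<lfloor>s\<rfloor> ^ n"
proof -
  have "1 + real n * (- 1 / s) \<le> (1 + (- 1 / s)) ^ n"
    using assms by (intro Bernoulli_inequality) simp
  then have "(1 - real n / s) * s ^ n \<le> (1 - 1 / s) ^ n * s ^ n"
    using assms by (intro mult_right_mono) simp_all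
  also have "\<dots> = (s - 1) ^ n"
    using assms by (simp add: power_mult_distrib[symmetric] field_simps)
  also have "\<dots> \<le> of_int \<lfloor>s\<rfloor> ^ n"
    using assms real_of_int_floor_gt_diff_one[of s] by (intro power_mono) simp_all
  finally show ?thesis .
qed

lemma powr_half_of_nat:
  fixes x :: real
  assumes "0 < x"
  shows "x powr (real n / 2) = sqrt x ^ n"
proof -
  have "x powr (real n / 2) = (x powr (1/2)) powr real n" by (simp add: powr_powr)
  also have "\<dots> = sqrt x ^ n" using assms by (simp add: powr_half_sqrt powr_realpow)
  finally show ?thesis .
qed

lemma lines_meeting_Ad_lower_bound:
  assumes "prime p" "2 \<le> d" "9 * int d ^ 3 \<le> p"
  shows "2 / pi\<^sup>2 * (real_of_int p / real d) powr (real d / 2)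
           \<le> real (card {L \<in> fp_lines p d. L \<inter> Ad p d \<noteq> {}})"
proof -
  define s where "s = sqrt (real_of_int p / real d)"
  have "1 < p" using assms(1) by (simp add: prime_gt_1_int)
  have "real_of_int (9 * int d ^ 3) \<le> real_of_int p" using assms(3) by (simp only: of_int_le_iff)
  then have "(3 * real d)^2 \<le> real_of_int p / real d"
    using assms(2) by (simp add: pos_le_divide_eq power2_eq_square power3_eq_cube algebra_simps)
  then have s: "3 * real d \<le> s" unfolding s_def by (simp add: real_le_rsqrt)
  have "(3::real)^2 \<le> pi\<^sup>2" using pi_gt3 by (intro power_mono) simp_all
  then have "2 / pi\<^sup>2 \<le> 2 / 9" by (intro divide_left_mono) simp_all
  then have "2 / pi\<^sup>2 * s ^ d \<le> 2 / 9 * s ^ d"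
    using s by (intro mult_right_mono) simp_all
  also have "\<dots> = (1 - 1/3) * s ^ d / 3" by simp
  also have "\<dots> \<le> (1 - real d / s) * s ^ d / 3"
    using s assms(2) by (intro divide_right_mono mult_right_mono) (simp_all add: field_simps)
  also have "\<dots> \<le> of_int (sigma p d) ^ d / 3"
  proof -
    have "1 \<le> s" using s assms(2) by simp
    then show ?thesis using floor_power_ge[of s d] by (simp add: sigma_def flip: s_def)
  qed
  also have "\<dots> \<le> real (card {x \<in> vecs_over d {1..sigma p d}. primitive d x})"
    using \<open>1 < p\<close> assms(2) by (intro card_primitive_vecs_over_ge sigma_nonneg) simp_all
  also have "\<dots> \<le> real (card {L \<in> fp_lines p d. L \<inter> Ad p d \<noteq> {}})"
  proof -
    have "int d * sigma p d ^ 2 \<le> p" using \<open>1 < p\<close> assms(2) by (intro sigma_square_le) simp_all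
    then have "sigma p d ^ 2 < p"
      using \<open>1 < p\<close> assms(2) mult_right_mono[of 2 "int d" "sigma p d ^ 2"] by simp
    then show ?thesis
      using \<open>1 < p\<close> card_primitive_le_card_lines[of p "sigma p d" d] sigma_nonneg[of p d]
      by (simp add: Ad_eq_vecs_over)
  qed
  finally show ?thesis
    using \<open>1 < p\<close> assms(2) by (simp add: s_def powr_half_of_nat)
qed

theorem mainTheorem7:
  fixes d :: nat
  assumes "d \<ge> 2"
  shows "(\<forall>p::int. prime p \<and> p \<noteq> int d \<longrightarrow>
            (\<forall>x\<in>Ad p d. \<forall>y\<in>Ad p d. fp_dot p d x y \<noteq> 0) \<and>
            (\<forall>x\<in>scaled_Ad p d. \<forall>y\<in>scaled_Ad p d. fp_dot p d x y \<noteq> 0))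
       \<and> (\<exists>e :: int \<Rightarrow> real. (e \<longlongrightarrow> 0) at_top \<and>
            (\<forall>p::int. prime p \<longrightarrow>
               real (card {L \<in> fp_lines p d. L \<inter> Ad p d \<noteq> {}})
                 \<ge> (1 - e p) * (2 / pi\<^sup>2) * (real_of_int p / real d) powr (real d / 2)))"
proof (intro conjI allI impI ballI)
  fix p :: int and x y
  assume "prime p \<and> p \<noteq> int d"
  then show "x \<in> Ad p d \<Longrightarrow> y \<in> Ad p d \<Longrightarrow> fp_dot p d x y \<noteq> 0"
    and "x \<in> scaled_Ad p d \<Longrightarrow> y \<in> scaled_Ad p d \<Longrightarrow> fp_dot p d x y \<noteq> 0"
    using assms fp_dot_Ad_nonzero fp_dot_scaled_Ad_nonzero by blast+
next
  define e where "e p = (if 9 * int d ^ 3 \<le> p then 0 else 1 :: real)" for p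
  have "\<forall>\<^sub>F p in at_top. e p = 0"
    using eventually_ge_at_top[of "9 * int d ^ 3"] by eventually_elim (simp add: e_def)
  then have "(e \<longlongrightarrow> 0) at_top" by (rule tendsto_eventually)
  moreover have "(1 - e p) * (2 / pi\<^sup>2) * (real_of_int p / real d) powr (real d / 2)
                   \<le> real (card {L \<in> fp_lines p d. L \<inter> Ad p d \<noteq> {}})" if "prime p" for p
    using lines_meeting_Ad_lower_bound[OF that assms] by (simp add: e_def)
  ultimately show "\<exists>e :: int \<Rightarrow> real. (e \<longlongrightarrow> 0) at_top \<and>
            (\<forall>p::int. prime p \<longrightarrow>
               real (card {L \<in> fp_lines p d. L \<inter> Ad p d \<noteq> {}})
                 \<ge> (1 - e p) * (2 / pi\<^sup>2) * (real_of_int p / real d) powr (real d / 2))"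
    by blast
qed

end
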